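(* Let $n,l\in\mathbb{N}^*$ and let $\beta\in\mathcal B_n$ be a braid whose closure is a knot. Let $Q(\beta)$ be its quantum representation on $(\mathbf V^l)^{\otimes n}$. Then \[ \operatorname{Tr}\big(Q(\beta)K^{-1},S_{n,l}\big)=\operatorname{Tr}\big(Q(\beta)K^{-1},\mathcal S^l\big). \]
   Context: Let $\mathcal{R}=\mathbb{Z}[s^{\pm1},q^{\pm1}]$, $s=q^{\alpha}$; $[i]_q=\frac{q^i-q^{-i}}{q-q^{-1}}$, $[k]_q!=\prod_{i\le k}[i]_q$, $\binom{k}{j}_q=\frac{[k]_q!}{[k-j]_q![j]_q!}$. The Verma module $V^s$ is free over $\mathcal R$ with basis $v_0,v_1,\dots$ and operators $Kv_j=sq^{-2j}v_j$, $Ev_j=v_{j-1}$ ($v_{-1}=0$), $F^{(m)}v_j=\binom{m+j}{j}_q\prod_{k=0}^{m-1}(sq^{-k-j}-s^{-1}q^{j+k})v_{j+m}$. Let $\mathrm{R}=q^{-\alpha^2/2}\,T\circ q^{H\otimes H/2}\circ\sum_{m\ge0}q^{m(m-1)/2}E^m\otimes F^{(m)}$ on $V^s\otimes V^s$, with $q^{H\otimes H/2}(v_i\otimes v_j)=q^{(\alpha-2i)(\alpha-2j)/2}v_i\otimes v_j$ and $T$ the flip; $Q(\sigma_i)=\mathrm{id}^{\otimes(i-1)}\otimes\mathrm R\otimes\mathrm{id}^{\otimes(n-i-1)}$ defines a representation $Q$ of the braid group $\mathcal B_n$ on $(V^s)^{\otimes n}$, and $K$ acts by $K^{\otimes n}$.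 Let $\mathbf V^l=V^s\otimes_{s\mapsto q^l}\mathbb{Z}[q^{\pm1}]$ with the specialized operators. $S_{n,l}\subset(\mathbf V^l)^{\otimes n}$ is the span of the vectors $v_{i_1}\otimes\cdots\otimes v_{i_n}$ with $\sum_j i_j\le nl$ (the sum of the weight spaces $\ker(K-q^{nl-2r})$, $0\le r\le nl$), and $\mathcal S^l=(S^l)^{\otimes n}$, where $S^l=\mathrm{span}(v_0,\dots,v_l)$, is the span of those with all $i_j\le l$; both are stable under $Q(\mathcal B_n)$ and $K$. $\operatorname{Tr}(f,Z)$ denotes the trace of $f$ restricted to $Z$. *)

theory Defs
  imports "HOL-Computational_Algebra.Formal_Laurent_Series" "Jordan_Normal_Form.Matrix"
begin

text \<open>Ground ring: Z[q,q^-1] is embedded in the field of formal Laurent series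
  over the rationals, with q the formal variable.\<close>

type_synonym lr = "rat fls"

definition qq :: lr where "qq = fls_X"

definition qint :: "nat \<Rightarrow> lr" where
  "qint i = (qq powi int i - qq powi (- int i)) / (qq - inverse qq)"

definition qfact :: "nat \<Rightarrow> lr" where
  "qfact k = (\<Prod>i\<in>{1..k}. qint i)"

definition qbinom :: "nat \<Rightarrow> nat \<Rightarrow> lr" where
  "qbinom k j = qfact k / (qfact (k - j) * qfact j)"

text \<open>Coefficient c with F^(m) v_j = c v_(j+m) in the specialized module V^l (s = q^l).\<close>
definition Fcoef :: "nat \<Rightarrow> nat \<Rightarrow> nat \<Rightarrow> lr" where
  "Fcoef l m j = qbinom (m + j) j *
     (\<Prod>k<m. qq powi (int l - int k - int j) - qq powi (int j + int k - int l))"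

text \<open>The factor q^(-alpha^2/2) q^(H tensor H/2) on v_a tensor v_b, specialized at alpha = l:
  q^(((l-2a)(l-2b) - l^2)/2); the exponent is an integer.\<close>
definition HHfactor :: "nat \<Rightarrow> nat \<Rightarrow> nat \<Rightarrow> lr" where
  "HHfactor l a b = qq powi ((( int l - 2 * int a) * (int l - 2 * int b) - (int l)^2) div 2)"

text \<open>Rcoef l (a,b) (i,j) = coefficient of v_a tensor v_b in R(v_i tensor v_j).
  R(v_i tensor v_j) = sum over m<=i of q^(m(m-1)/2) HHfactor (i-m) (j+m) F^(m)-coef
  times v_(j+m) tensor v_(i-m) (after the flip T).\<close>
definition Rcoef :: "nat \<Rightarrow> nat \<times> nat \<Rightarrow> nat \<times> nat \<Rightarrow> lr" where
  "Rcoef l ab ij = (case ab of (a, b) \<Rightarrow> case ij of (i, j) \<Rightarrow>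
     (\<Sum>m\<in>{0..i}. if a = j + m \<and> b = i - m
        then qq powi int (m * (m - 1) div 2) * HHfactor l (i - m) (j + m) * Fcoef l m j
        else 0))"

text \<open>Basis of (V^l)^(tensor n): tuples (lists of length n). Q(sigma_i), 1 <= i <= n-1,
  acts by R on tensor positions i, i+1 (list positions i-1, i).\<close>
definition sigma_coef :: "nat \<Rightarrow> nat \<Rightarrow> nat list \<Rightarrow> nat list \<Rightarrow> lr" where
  "sigma_coef l i u v =
     (if length u = length v \<and> (\<forall>k<length u. k \<noteq> i - 1 \<and> k \<noteq> i \<longrightarrow> u ! k = v ! k)
      then Rcoef l (u ! (i - 1), u ! i) (v ! (i - 1), v ! i) else 0)"

definition basisS :: "nat \<Rightarrow> nat \<Rightarrow> nat list list" where
  "basisS n l = filter (\<lambda>v. sum_list v \<le> n * l) (List.n_lists n [0..<n * l + 1])"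

definition dimS :: "nat \<Rightarrow> nat \<Rightarrow> nat" where
  "dimS n l = length (basisS n l)"

text \<open>Matrix of Q(sigma_i) restricted to the invariant subspace S_{n,l}.\<close>
definition sigma_mat :: "nat \<Rightarrow> nat \<Rightarrow> nat \<Rightarrow> lr mat" where
  "sigma_mat n l i = mat (dimS n l) (dimS n l)
     (\<lambda>(r, c). sigma_coef l i (basisS n l ! r) (basisS n l ! c))"

definition inv_mat :: "nat \<Rightarrow> lr mat \<Rightarrow> lr mat" where
  "inv_mat d A = (SOME B. B \<in> carrier_mat d d \<and> A * B = 1\<^sub>m d \<and> B * A = 1\<^sub>m d)"

text \<open>Braid words: (i, True) = sigma_i, (i, False) = sigma_i^-1.\<close>
definition valid_braid :: "nat \<Rightarrow> (nat \<times> bool) list \<Rightarrow> bool" where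
  "valid_braid n w = (\<forall>(i, e) \<in> set w. 1 \<le> i \<and> i \<le> n - 1)"

definition gen_mat :: "nat \<Rightarrow> nat \<Rightarrow> nat \<times> bool \<Rightarrow> lr mat" where
  "gen_mat n l g = (case g of (i, e) \<Rightarrow>
     if e then sigma_mat n l i else inv_mat (dimS n l) (sigma_mat n l i))"

definition Q_mat :: "nat \<Rightarrow> nat \<Rightarrow> (nat \<times> bool) list \<Rightarrow> lr mat" where
  "Q_mat n l w = foldr (\<lambda>g M. gen_mat n l g * M) w (1\<^sub>m (dimS n l))"

text \<open>K^-1 on S_{n,l}: K acts on v_{i_1} tensor ... tensor v_{i_n} by q^(n l - 2 sum i_j).\<close>
definition Kinv_mat :: "nat \<Rightarrow> nat \<Rightarrow> lr mat" where
  "Kinv_mat n l = mat (dimS n l) (dimS n l)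
     (\<lambda>(r, c). if r = c then qq powi (2 * int (sum_list (basisS n l ! r)) - int (n * l)) else 0)"

text \<open>Underlying permutation of a braid word (sigma_i swaps strands i-1 and i, 0-based).\<close>
definition braid_perm :: "(nat \<times> bool) list \<Rightarrow> nat \<Rightarrow> nat" where
  "braid_perm w = foldr (\<lambda>(i, e) f. (id(i - 1 := i, i := i - 1)) \<circ> f) w id"

text \<open>Closure is a knot: the permutation is transitive (one cycle) on the n strands.\<close>
definition closure_is_knot :: "nat \<Rightarrow> (nat \<times> bool) list \<Rightarrow> bool" where
  "closure_is_knot n w = (\<forall>a<n. \<forall>b<n. \<exists>k. (braid_perm w ^^ k) a = b)"

definition trace_on :: "nat \<Rightarrow> nat \<Rightarrow> lr mat \<Rightarrow> (nat list \<Rightarrow> bool) \<Rightarrow> lr" where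
  "trace_on n l M P = (\<Sum>r\<in>{r. r < dimS n l \<and> P (basisS n l ! r)}. M $$ (r, r))"

end

theory Submission
  imports Defs "Jordan_Normal_Form.Determinant" "HOL-Combinatorics.Permutations"
begin

text \<open>Call position \<open>k\<close> of a basis vector \<open>v\<^sub>i\<^sub>1 \<otimes> \<dots> \<otimes> v\<^sub>i\<^sub>n\<close> big if \<open>i\<^sub>k > l\<close>.
  Since \<open>F\<^sup>(\<^sup>m\<^sup>) v\<^sub>j = 0\<close> whenever \<open>j \<le> l < j + m\<close>, a nonzero entry of the matrix of
  \<open>\<sigma>\<^sub>i\<close> from \<open>v\<close> to \<open>u\<close> forces the big positions of \<open>u\<close> into those of \<open>v\<close>, transposed
  by \<open>(i - 1, i)\<close>. The same holds for \<open>\<sigma>\<^sub>i\<^sup>-\<^sup>1\<close>, because \<open>\<sigma>\<^sub>i\<close> is triangular up to that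
  transposition. Multiplying out, a nonzero diagonal entry of \<open>Q(\<beta>)\<close> at \<open>u\<close> makes the set of
  big positions of \<open>u\<close> invariant under the permutation of \<open>\<beta>\<close>. For a knot this permutation
  is transitive, so the set is empty or everything, and the latter contradicts
  \<open>i\<^sub>1 + \<dots> + i\<^sub>n \<le> n l\<close>. Since \<open>K\<^sup>-\<^sup>1\<close> is diagonal, the trace over \<open>S\<^sub>n\<^sub>,\<^sub>l\<close>
  only sees the vectors without big positions, i.e. those of \<open>\<S>\<^sup>l\<close>.\<close>

section \<open>Matrices carrying a marking of their indices\<close>

lemma index_mult_mat_sum:
  fixes A B :: "'a::semiring_0 mat"
  assumes "dim_col A = dim_row B" "r < dim_row A" "c < dim_col B"
  shows "(A * B) $$ (r, c) = (\<Sum>k<dim_col A. A $$ (r, k) * B $$ (k, c))"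
  using assms by (simp add: scalar_prod_def lessThan_atLeast0)

lemma diag_mult_diagonal_mat:
  fixes A K :: "'a::semiring_0 mat"
  assumes "diagonal_mat K" "A \<in> carrier_mat d d" "K \<in> carrier_mat d d" "r < d"
  shows "(A * K) $$ (r, r) = A $$ (r, r) * K $$ (r, r)"
proof -
  have "(A * K) $$ (r, r) = (\<Sum>k<d. A $$ (r, k) * K $$ (k, r))"
    using assms by (simp add: index_mult_mat_sum del: index_mult_mat)
  also have "\<dots> = (\<Sum>k<d. if k = r then A $$ (r, r) * K $$ (r, r) else 0)"
    using assms by (intro sum.cong) (auto simp: diagonal_mat_def)
  finally show ?thesis
    using assms by simp
qed

definition carries_marking :: "(nat \<Rightarrow> 'b set) \<Rightarrow> ('b \<Rightarrow> 'b) \<Rightarrow> 'a::zero mat \<Rightarrow> bool" where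
  "carries_marking W f M \<longleftrightarrow>
     (\<forall>r<dim_row M. \<forall>c<dim_col M. M $$ (r, c) \<noteq> 0 \<longrightarrow> W r \<subseteq> f ` W c)"

lemma carries_marking_one: "carries_marking W id (1\<^sub>m d :: 'a::zero_neq_one mat)"
  by (simp add: carries_marking_def)

lemma carries_marking_mult:
  fixes A B :: "'a::semiring_0 mat"
  assumes "dim_col A = dim_row B" "carries_marking W f A" "carries_marking W g B"
  shows "carries_marking W (f \<circ> g) (A * B)"
  unfolding carries_marking_def
proof (intro allI impI)
  fix r c assume r: "r < dim_row (A * B)" and c: "c < dim_col (A * B)"
    and nonzero: "(A * B) $$ (r, c) \<noteq> 0"
  moreover have "(A * B) $$ (r, c) = (\<Sum>k<dim_col A. A $$ (r, k) * B $$ (k, c))"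
    using assms(1) r c by (intro index_mult_mat_sum) simp_all
  ultimately have "(\<Sum>k<dim_col A. A $$ (r, k) * B $$ (k, c)) \<noteq> 0"
    by simp
  then obtain k where k: "k < dim_col A" and "A $$ (r, k) * B $$ (k, c) \<noteq> 0"
    using sum.not_neutral_contains_not_neutral by blast
  then have "A $$ (r, k) \<noteq> 0" "B $$ (k, c) \<noteq> 0"
    by auto
  then have "W r \<subseteq> f ` W k" "W k \<subseteq> g ` W c"
    using assms r c k unfolding carries_marking_def by simp_all
  then show "W r \<subseteq> (f \<circ> g) ` W c"
    by (metis image_comp image_mono order_trans)
qed

lemma carries_marking_diag:
  assumes "carries_marking W f M" "r < dim_row M" "r < dim_col M" "M $$ (r, r) \<noteq> 0"
  shows "W r \<subseteq> f ` W r"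
  using assms unfolding carries_marking_def by blast

lemma funpow_image_eq_if_subset_image:
  assumes "finite W" "inj f" "W \<subseteq> f ` W"
  shows "(f ^^ k) ` W = W"
proof -
  have "card (f ` W) = card W"
    using assms(2) by (simp add: card_image inj_on_subset)
  then have fixed: "f ` W = W"
    using assms by (metis card_subset_eq finite_imageI)
  show ?thesis
  proof (induction k)
    case (Suc k)
    have "(f ^^ Suc k) ` W = f ` (f ^^ k) ` W"
      by (simp add: image_image)
    then show ?case
      using Suc fixed by simp
  qed simp
qed

section \<open>Inverting a matrix that is triangular up to an involution\<close>

text \<open>The rows of \<open>A\<close> can be ordered (by \<open>\<phi>\<close>) so that, after permuting the columns by
  \<open>\<tau>\<close>, \<open>A\<close> becomes triangular with nonzero diagonal.\<close>

locale twisted_triangular =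
  fixes d :: nat and A :: "'a::field mat" and \<tau> \<phi> :: "nat \<Rightarrow> nat"
  assumes A_carrier: "A \<in> carrier_mat d d"
    and \<tau>_less: "r < d \<Longrightarrow> \<tau> r < d"
    and \<tau>_involutive: "r < d \<Longrightarrow> \<tau> (\<tau> r) = r"
    and pivot_nonzero: "r < d \<Longrightarrow> A $$ (r, \<tau> r) \<noteq> 0"
    and off_pivot_decreasing: "\<lbrakk>r < d; k < d; A $$ (r, k) \<noteq> 0; k \<noteq> \<tau> r\<rbrakk> \<Longrightarrow> \<phi> (\<tau> k) < \<phi> r"
begin

lemma vanishing_row_sum_off_pivot:
  assumes r: "r < d" and row: "(\<Sum>k<d. A $$ (r, k) * x k) = 0" and "x (\<tau> r) \<noteq> 0"
  obtains k where "k < d" "k \<noteq> \<tau> r" "A $$ (r, k) \<noteq> 0" "x k \<noteq> 0"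
proof -
  have "(\<Sum>k<d. A $$ (r, k) * x k) = A $$ (r, \<tau> r) * x (\<tau> r) + (\<Sum>k\<in>{..<d} - {\<tau> r}. A $$ (r, k) * x k)"
    using r \<tau>_less by (subst sum.remove[of _ "\<tau> r"]) auto
  then have "(\<Sum>k\<in>{..<d} - {\<tau> r}. A $$ (r, k) * x k) \<noteq> 0"
    using row pivot_nonzero[OF r] \<open>x (\<tau> r) \<noteq> 0\<close> by auto
  then obtain k where "k \<in> {..<d} - {\<tau> r}" "A $$ (r, k) * x k \<noteq> 0"
    by (rule sum.not_neutral_contains_not_neutral)
  then show ?thesis
    using that by auto
qed

lemma det_nonzero: "det A \<noteq> 0"
proof
  assume "det A = 0"
  then obtain v where v: "v \<in> carrier_vec d" "v \<noteq> 0\<^sub>v d" "A *\<^sub>v v = 0\<^sub>v d"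
    using det_0_iff_vec_prod_zero_field[OF A_carrier] by blast
  have row: "(\<Sum>k<d. A $$ (r, k) * v $ k) = 0" if "r < d" for r
    using arg_cong[OF v(3), of "\<lambda>w. vec_index w r"] that A_carrier v(1)
    by (simp add: scalar_prod_def lessThan_atLeast0)
  have vanish: "v $ \<tau> r = 0" if "r < d" for r
    using that
  proof (induction "\<phi> r" arbitrary: r rule: less_induct)
    case less
    show ?case
    proof (rule ccontr)
      assume "v $ \<tau> r \<noteq> 0"
      then obtain k where k: "k < d" "k \<noteq> \<tau> r" "A $$ (r, k) \<noteq> 0" "v $ k \<noteq> 0"
        using vanishing_row_sum_off_pivot[OF less.prems row[OF less.prems]] by blast
      have "v $ \<tau> (\<tau> k) = 0"
        using less.hyps[of "\<tau> k"] off_pivot_decreasing[OF less.prems k(1,3,2)] \<tau>_less[OF k(1)] by blast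
      with k show False
        using \<tau>_involutive by simp
    qed
  qed
  have "v = 0\<^sub>v d"
  proof (rule eq_vecI)
    fix j assume "j < dim_vec (0\<^sub>v d)"
    then show "v $ j = 0\<^sub>v d $ j"
      using vanish[of "\<tau> j"] \<tau>_less \<tau>_involutive by simp
  qed (use v(1) in simp)
  with v(2) show False ..
qed

lemma invertible: "\<exists>B. B \<in> carrier_mat d d \<and> A * B = 1\<^sub>m d \<and> B * A = 1\<^sub>m d"
  using det_non_zero_imp_unit[OF A_carrier det_nonzero, of "()"]
  unfolding Units_def ring_mat_def by auto

lemma right_inverse_support:
  assumes Y: "Y \<in> carrier_mat d d" "A * Y = 1\<^sub>m d"
    and R_refl: "\<And>r. R r r" and R_trans: "\<And>a b c. R a b \<Longrightarrow> R b c \<Longrightarrow> R a c"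
    and support: "\<And>r k. r < d \<Longrightarrow> k < d \<Longrightarrow> A $$ (r, k) \<noteq> 0 \<Longrightarrow> R r (\<tau> k)"
    and k: "k < d" and c: "c < d" and nonzero: "Y $$ (k, c) \<noteq> 0"
  shows "R (\<tau> k) c"
proof -
  have "R r c" if "r < d" "Y $$ (\<tau> r, c) \<noteq> 0" for r
    using that
  proof (induction "\<phi> r" arbitrary: r rule: less_induct)
    case less
    show ?case
    proof (cases "r = c")
      case False
      have "(A * Y) $$ (r, c) = 0"
        using Y(2) False less.prems(1) c by simp
      then have row: "(\<Sum>k<d. A $$ (r, k) * Y $$ (k, c)) = 0"
        using index_mult_mat_sum[of A Y r c] A_carrier Y(1) less.prems(1) c by simp
      obtain k where k: "k < d" "k \<noteq> \<tau> r" "A $$ (r, k) \<noteq> 0" "Y $$ (k, c) \<noteq> 0"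
        using vanishing_row_sum_off_pivot[OF less.prems(1) row less.prems(2)] by blast
      have "R (\<tau> k) c"
        using less.hyps[of "\<tau> k"] off_pivot_decreasing[OF less.prems(1) k(1,3,2)]
          \<tau>_less[OF k(1)] \<tau>_involutive[OF k(1)] k(4) by simp
      then show ?thesis
        using R_trans[OF support[OF less.prems(1) k(1,3)]] by blast
    qed (simp add: R_refl)
  qed
  then show ?thesis
    using k nonzero \<tau>_less \<tau>_involutive by simp
qed

end

lemma inv_mat_inverts:
  assumes "\<exists>B. B \<in> carrier_mat d d \<and> A * B = 1\<^sub>m d \<and> B * A = 1\<^sub>m d"
  shows "inv_mat d A \<in> carrier_mat d d \<and> A * inv_mat d A = 1\<^sub>m d \<and> inv_mat d A * A = 1\<^sub>m d"
  unfolding inv_mat_def using assms by (rule someI_ex)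

lemma set_basisS: "v \<in> set (basisS n l) \<longleftrightarrow> length v = n \<and> sum_list v \<le> n * l"
proof -
  have "sum_list v \<le> n * l \<Longrightarrow> set v \<subseteq> set [0..<n * l + 1]"
    using member_le_sum_list[of _ v] by fastforce
  then show ?thesis
    unfolding basisS_def by (auto simp: set_n_lists)
qed

lemma distinct_basisS: "distinct (basisS n l)"
  unfolding basisS_def by (intro distinct_filter distinct_n_lists) simp

lemma basisS_nth:
  assumes "r < dimS n l"
  shows "length (basisS n l ! r) = n" "sum_list (basisS n l ! r) \<le> n * l"
  using assms set_basisS[of "basisS n l ! r" n l] unfolding dimS_def by auto

definition basis_index :: "nat \<Rightarrow> nat \<Rightarrow> nat list \<Rightarrow> nat" where
  "basis_index n l = the_inv_into {..<dimS n l} ((!) (basisS n l))"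

lemma inj_on_basisS_nth: "inj_on ((!) (basisS n l)) {..<dimS n l}"
  by (simp add: inj_on_nth distinct_basisS dimS_def)

lemma basis_index:
  assumes "v \<in> set (basisS n l)"
  shows "basis_index n l v < dimS n l" "basisS n l ! basis_index n l v = v"
proof -
  have v: "v \<in> (!) (basisS n l) ` {..<dimS n l}"
    using assms by (auto simp: dimS_def in_set_conv_nth)
  show "basis_index n l v < dimS n l"
    unfolding basis_index_def using the_inv_into_into[OF inj_on_basisS_nth v order_refl] by simp
  show "basisS n l ! basis_index n l v = v"
    unfolding basis_index_def using f_the_inv_into_f[OF inj_on_basisS_nth v] .
qed

lemma basis_index_nth: "r < dimS n l \<Longrightarrow> basis_index n l (basisS n l ! r) = r"
  unfolding basis_index_def by (simp add: the_inv_into_f_f[OF inj_on_basisS_nth])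

definition swap_index :: "nat \<Rightarrow> nat \<Rightarrow> nat \<Rightarrow> nat \<Rightarrow> nat" where
  "swap_index n l i r = basis_index n l (permute_list (transpose (i - 1) i) (basisS n l ! r))"

lemma nth_permute_list: "k < length v \<Longrightarrow> permute_list f v ! k = v ! f k"
  by (simp add: permute_list_def)

lemma transpose_less: "a < n \<Longrightarrow> b < n \<Longrightarrow> k < n \<Longrightarrow> transpose a b k < n"
  by (simp add: transpose_def)

lemma swap_index:
  assumes i: "i < n" and r: "r < dimS n l"
  shows "swap_index n l i r < dimS n l"
    and "basisS n l ! swap_index n l i r = permute_list (transpose (i - 1) i) (basisS n l ! r)"
    and "swap_index n l i (swap_index n l i r) = r"
proof -
  let ?t = "transpose (i - 1) i" and ?u = "basisS n l ! r"
  have "?t permutes {..<length ?u}"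
    using basisS_nth(1)[OF r] i by (intro permutes_swap_id) auto
  then have "sum_list (permute_list ?t ?u) = sum_list ?u"
    by (metis mset_permute_list sum_mset_sum_list)
  then have "permute_list ?t ?u \<in> set (basisS n l)"
    using basisS_nth[OF r] by (simp add: set_basisS)
  then show swapped: "swap_index n l i r < dimS n l" "basisS n l ! swap_index n l i r = permute_list ?t ?u"
    unfolding swap_index_def by (simp_all add: basis_index)
  have "permute_list ?t (permute_list ?t ?u) = ?u"
    using basisS_nth(1)[OF r] i by (intro nth_equalityI) (simp_all add: nth_permute_list transpose_less)
  then have "swap_index n l i (swap_index n l i r) = basis_index n l ?u"
    by (simp only: swap_index_def[of n l i "swap_index n l i r"] swapped(2))
  then show "swap_index n l i (swap_index n l i r) = r"
    using basis_index_nth[OF r] by simp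
qed

definition big_positions :: "nat \<Rightarrow> nat list \<Rightarrow> nat set" where
  "big_positions l v = {k. k < length v \<and> l < v ! k}"

lemma big_positions_permute_transpose:
  assumes "a < length v" "b < length v"
  shows "big_positions l (permute_list (transpose a b) v) = transpose a b ` big_positions l v"
proof -
  have "k \<in> big_positions l (permute_list (transpose a b) v) \<longleftrightarrow> transpose a b k \<in> big_positions l v" for k
  proof -
    have "k < length v \<longleftrightarrow> transpose a b k < length v"
      using assms transpose_less by (metis transpose_involutory)
    then show ?thesis
      unfolding big_positions_def by (auto simp: nth_permute_list)
  qed
  then show ?thesis
    by (simp add: set_eq_iff in_transpose_image_iff)
qed

section \<open>Matrix coefficients of the R-matrix\<close>

lemma qq_powi_eq_iff: "qq powi a = qq powi b \<longleftrightarrow> a = b"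
proof
  assume "qq powi a = qq powi b"
  then have "fls_subdegree (qq powi a) = fls_subdegree (qq powi b)" by simp
  then show "a = b" unfolding qq_def by simp
qed simp

lemma qq_nonzero: "qq \<noteq> 0"
  unfolding qq_def by simp

lemma qfact_nonzero: "qfact k \<noteq> 0"
proof -
  have "qq - inverse qq \<noteq> 0"
    using qq_powi_eq_iff[of 1 "-1"] by (simp add: power_int_minus)
  moreover have "qq powi int i - qq powi (- int i) \<noteq> 0" if "i \<ge> 1" for i
    using qq_powi_eq_iff[of "int i" "- int i"] that by simp
  ultimately show ?thesis
    unfolding qfact_def qint_def by simp
qed

lemma Fcoef_0: "Fcoef l 0 j = 1"
  unfolding Fcoef_def qbinom_def using qfact_nonzero[of j] by (simp add: qfact_def)

text \<open>The factor with \<open>k = l - j\<close> vanishes; this is why \<open>S\<^sup>l\<close> is a submodule.\<close>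

lemma Fcoef_vanishes:
  assumes "j \<le> l" "l < j + m"
  shows "Fcoef l m j = 0"
proof -
  have "(\<Prod>k<m. qq powi (int l - int k - int j) - qq powi (int j + int k - int l)) = 0"
    using assms by (intro prod_zero) (auto intro!: bexI[of _ "l - j"])
  then show ?thesis
    unfolding Fcoef_def by simp
qed

lemma Rcoef_nonzeroE:
  assumes "Rcoef l (a, b) (x, y) \<noteq> 0"
  obtains m where "a = y + m" "x = b + m" "Fcoef l m y \<noteq> 0"
proof -
  from assms obtain m where "m \<le> x" and "a = y + m" "b = x - m"
    and "qq powi int (m * (m - 1) div 2) * HHfactor l (x - m) (y + m) * Fcoef l m y \<noteq> 0"
    unfolding Rcoef_def by (auto elim!: sum.not_neutral_contains_not_neutral split: if_splits)
  then show ?thesis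
    using that by force
qed

lemma sigma_coef_nonzeroE:
  assumes "sigma_coef l i u v \<noteq> 0"
  obtains m where "u ! (i - 1) = v ! i + m" "v ! (i - 1) = u ! i + m" "Fcoef l m (v ! i) \<noteq> 0"
    and "length u = length v" "\<And>k. k < length u \<Longrightarrow> k \<noteq> i - 1 \<Longrightarrow> k \<noteq> i \<Longrightarrow> u ! k = v ! k"
  using assms Rcoef_nonzeroE[of l "u ! (i - 1)" "u ! i" "v ! (i - 1)" "v ! i"]
  unfolding sigma_coef_def by (metis (no_types, lifting))

lemma sigma_coef_swap_nonzero:
  assumes "i < length u"
  shows "sigma_coef l i u (permute_list (transpose (i - 1) i) u) \<noteq> 0"
proof -
  let ?T = "\<lambda>m. qq powi int (m * (m - 1) div 2) * HHfactor l (u ! i - m) (u ! (i - 1) + m)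
                 * Fcoef l m (u ! (i - 1))"
  have "Rcoef l (u ! (i - 1), u ! i) (u ! i, u ! (i - 1)) = (\<Sum>m\<in>{0..u ! i}. if m = 0 then ?T m else 0)"
    unfolding Rcoef_def prod.case by (intro sum.cong) auto
  also have "\<dots> \<noteq> 0"
    by (simp add: Fcoef_0 HHfactor_def qq_nonzero)
  finally show ?thesis
    using assms unfolding sigma_coef_def
    by (auto simp: nth_permute_list)
qed

lemma big_positions_sigma_coef:
  assumes "sigma_coef l i u v \<noteq> 0" "1 \<le> i" "i < length v"
  shows "big_positions l u \<subseteq> transpose (i - 1) i ` big_positions l v"
proof
  fix k assume "k \<in> big_positions l u"
  obtain m where m: "u ! (i - 1) = v ! i + m" "v ! (i - 1) = u ! i + m" "Fcoef l m (v ! i) \<noteq> 0"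
    and len: "length u = length v" and other: "\<And>k. k < length u \<Longrightarrow> k \<noteq> i - 1 \<Longrightarrow> k \<noteq> i \<Longrightarrow> u ! k = v ! k"
    using sigma_coef_nonzeroE[OF assms(1)] by blast
  have k: "k < length v" "l < u ! k"
    using \<open>k \<in> big_positions l u\<close> len by (simp_all add: big_positions_def)
  have "transpose (i - 1) i k \<in> big_positions l v"
  proof (cases "k = i - 1")
    case True
    have "\<not> (v ! i \<le> l \<and> l < v ! i + m)"
      using m(3) Fcoef_vanishes by blast
    then have "l < v ! i"
      using k(2) m(1) True by auto
    then show ?thesis
      using True assms(3) by (simp add: big_positions_def)
  next
    case False
    show ?thesis
    proof (cases "k = i")
      case True
      then have "l < v ! (i - 1)"
        using k(2) m(2) by simp
      then show ?thesis
        using True assms(3) by (simp add: big_positions_def)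
    next
      case False
      then show ?thesis
        using \<open>k \<noteq> i - 1\<close> k other len by (simp add: big_positions_def)
    qed
  qed
  then show "k \<in> transpose (i - 1) i ` big_positions l v"
    by (simp add: in_transpose_image_iff)
qed

section \<open>The braid group action on \<open>S\<^sub>n\<^sub>,\<^sub>l\<close>\<close>

abbreviation big_marking :: "nat \<Rightarrow> nat \<Rightarrow> nat \<Rightarrow> nat set" where
  "big_marking n l r \<equiv> big_positions l (basisS n l ! r)"

lemma sigma_mat_carrier: "sigma_mat n l i \<in> carrier_mat (dimS n l) (dimS n l)"
  unfolding sigma_mat_def by simp

lemma sigma_mat_entry_nonzero:
  assumes "sigma_mat n l i $$ (r, k) \<noteq> 0" "1 \<le> i" "i < n" "r < dimS n l" "k < dimS n l"
  shows "big_marking n l r \<subseteq> big_marking n l (swap_index n l i k)"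
proof -
  have "sigma_coef l i (basisS n l ! r) (basisS n l ! k) \<noteq> 0"
    using assms unfolding sigma_mat_def by simp
  then have "big_marking n l r \<subseteq> transpose (i - 1) i ` big_marking n l k"
    using assms(2,3) basisS_nth(1)[OF assms(5)] by (intro big_positions_sigma_coef) simp_all
  also have "\<dots> = big_marking n l (swap_index n l i k)"
    using assms(2,3) basisS_nth(1)[OF assms(5)] swap_index(2)[OF assms(3,5)]
    by (simp add: big_positions_permute_transpose)
  finally show ?thesis .
qed

text \<open>Off the swap, \<open>\<sigma>\<^sub>i\<close> moves \<open>m > 0\<close> from factor \<open>i\<close> to factor \<open>i - 1\<close>, so the
  entry in position \<open>i - 1\<close> serves as the order \<open>\<phi>\<close>.\<close>

lemma sigma_mat_twisted_triangular:
  assumes i: "1 \<le> i" "i < n"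
  shows "twisted_triangular (dimS n l) (sigma_mat n l i) (swap_index n l i) (\<lambda>r. basisS n l ! r ! (i - 1))"
proof
  fix r assume r: "r < dimS n l"
  show "swap_index n l i r < dimS n l" "swap_index n l i (swap_index n l i r) = r"
    using swap_index[OF i(2) r] by simp_all
  have "sigma_mat n l i $$ (r, swap_index n l i r)
      = sigma_coef l i (basisS n l ! r) (permute_list (transpose (i - 1) i) (basisS n l ! r))"
    using swap_index[OF i(2) r] r unfolding sigma_mat_def by simp
  then show "sigma_mat n l i $$ (r, swap_index n l i r) \<noteq> 0"
    using sigma_coef_swap_nonzero basisS_nth(1)[OF r] i(2) by simp
next
  fix r k assume r: "r < dimS n l" and k: "k < dimS n l"
    and nonzero: "sigma_mat n l i $$ (r, k) \<noteq> 0" and off: "k \<noteq> swap_index n l i r"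
  let ?u = "basisS n l ! r" and ?v = "basisS n l ! k"
  have "sigma_coef l i ?u ?v \<noteq> 0"
    using nonzero r k unfolding sigma_mat_def by simp
  then obtain m where m: "?u ! (i - 1) = ?v ! i + m" "?v ! (i - 1) = ?u ! i + m"
    and other: "\<And>j. j < length ?u \<Longrightarrow> j \<noteq> i - 1 \<Longrightarrow> j \<noteq> i \<Longrightarrow> ?u ! j = ?v ! j"
    by (rule sigma_coef_nonzeroE) blast
  have len: "length ?u = n" "length ?v = n"
    using basisS_nth r k by auto
  have "m \<noteq> 0"
  proof
    assume "m = 0"
    then have "?v = permute_list (transpose (i - 1) i) ?u"
      using m other len i by (intro nth_equalityI) (auto simp: nth_permute_list transpose_def)
    then show False
      using off basis_index_nth[OF k] unfolding swap_index_def by simp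
  qed
  then show "basisS n l ! swap_index n l i k ! (i - 1) < ?u ! (i - 1)"
    using m len i by (simp add: swap_index[OF i(2) k] nth_permute_list)
qed (simp add: sigma_mat_carrier)

lemma inv_sigma_mat:
  assumes "1 \<le> i" "i < n"
  shows "inv_mat (dimS n l) (sigma_mat n l i) \<in> carrier_mat (dimS n l) (dimS n l)"
    and "sigma_mat n l i * inv_mat (dimS n l) (sigma_mat n l i) = 1\<^sub>m (dimS n l)"
  using inv_mat_inverts[OF twisted_triangular.invertible[OF sigma_mat_twisted_triangular[OF assms]]]
  by simp_all

lemma gen_mat_carrier: "1 \<le> i \<Longrightarrow> i < n \<Longrightarrow> gen_mat n l (i, e) \<in> carrier_mat (dimS n l) (dimS n l)"
  using inv_sigma_mat(1) sigma_mat_carrier unfolding gen_mat_def by simp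

lemma gen_mat_carries_marking:
  assumes i: "1 \<le> i" "i < n"
  shows "carries_marking (big_marking n l) (transpose (i - 1) i) (gen_mat n l (i, e))"
proof -
  let ?d = "dimS n l" and ?A = "sigma_mat n l i" and ?Y = "inv_mat (dimS n l) (sigma_mat n l i)"
    and ?t = "transpose (i - 1) i" and ?W = "big_marking n l"
  interpret twisted_triangular ?d ?A "swap_index n l i" "\<lambda>r. basisS n l ! r ! (i - 1)"
    by (rule sigma_mat_twisted_triangular[OF i])
  have Y: "?Y \<in> carrier_mat ?d ?d" "?A * ?Y = 1\<^sub>m ?d"
    using inv_sigma_mat[OF i] by simp_all
  have support: "?W r \<subseteq> ?W (swap_index n l i k)" if "r < ?d" "k < ?d" "?A $$ (r, k) \<noteq> 0" for r k
    using sigma_mat_entry_nonzero[OF that(3) i that(1,2)] .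
  have swapped: "?W (swap_index n l i k) = ?t ` ?W k" if "k < ?d" for k
    using that i basisS_nth(1)[OF that] by (simp add: swap_index big_positions_permute_transpose)
  have "carries_marking ?W ?t ?A"
    unfolding carries_marking_def
  proof (intro allI impI)
    fix r k assume "r < dim_row ?A" "k < dim_col ?A" and nonzero: "?A $$ (r, k) \<noteq> 0"
    then have "r < ?d" "k < ?d"
      unfolding sigma_mat_def by simp_all
    then show "?W r \<subseteq> ?t ` ?W k"
      using support nonzero swapped by simp
  qed
  moreover have "carries_marking ?W ?t ?Y"
    unfolding carries_marking_def
  proof (intro allI impI)
    fix k c assume "k < dim_row ?Y" "c < dim_col ?Y" and nonzero: "?Y $$ (k, c) \<noteq> 0"
    then have k: "k < ?d" and c: "c < ?d"
      using Y(1) by auto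
    have "?W (swap_index n l i k) \<subseteq> ?W c"
      using right_inverse_support[of ?Y "\<lambda>r c. ?W r \<subseteq> ?W c", OF Y _ _ support k c nonzero]
      by blast
    then have "?t ` ?W (swap_index n l i k) \<subseteq> ?t ` ?W c"
      by (rule image_mono)
    then show "?W k \<subseteq> ?t ` ?W c"
      using swapped[OF k] by (simp add: image_comp)
  qed
  ultimately show ?thesis
    unfolding gen_mat_def by simp
qed

lemma braid_perm_Cons: "braid_perm ((i, e) # w) = transpose (i - 1) i \<circ> braid_perm w"
  unfolding braid_perm_def by (simp add: transpose_def fun_eq_iff)

lemma inj_braid_perm: "inj (braid_perm w)"
proof (induction w)
  case (Cons g w)
  obtain i e where g: "g = (i, e)"
    by fastforce
  show ?case
    unfolding g braid_perm_Cons by (rule inj_compose[OF inj_transpose Cons.IH])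
qed (simp add: braid_perm_def)

lemma valid_braid_Cons: "valid_braid n ((i, e) # w) \<longleftrightarrow> 1 \<le> i \<and> i < n \<and> valid_braid n w"
  unfolding valid_braid_def by auto

lemma Q_mat_Cons: "Q_mat n l (g # w) = gen_mat n l g * Q_mat n l w"
  unfolding Q_mat_def by simp

lemma Q_mat_carrier: "valid_braid n w \<Longrightarrow> Q_mat n l w \<in> carrier_mat (dimS n l) (dimS n l)"
proof (induction w)
  case (Cons g w)
  obtain i e where g: "g = (i, e)"
    by fastforce
  have i: "1 \<le> i" "i < n" and w: "valid_braid n w"
    using Cons.prems unfolding g valid_braid_Cons by simp_all
  show ?case
    unfolding g Q_mat_Cons by (rule mult_carrier_mat[OF gen_mat_carrier[OF i] Cons.IH[OF w]])
qed (simp add: Q_mat_def)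

lemma Q_mat_carries_marking:
  "valid_braid n w \<Longrightarrow> carries_marking (big_marking n l) (braid_perm w) (Q_mat n l w)"
proof (induction w)
  case Nil
  have "Q_mat n l [] = 1\<^sub>m (dimS n l)" "braid_perm [] = id"
    by (simp_all add: Q_mat_def braid_perm_def)
  then show ?case
    by (simp only: carries_marking_one)
next
  case (Cons g w)
  obtain i e where g: "g = (i, e)"
    by fastforce
  have i: "1 \<le> i" "i < n" and w: "valid_braid n w"
    using Cons.prems unfolding g valid_braid_Cons by simp_all
  have "gen_mat n l (i, e) \<in> carrier_mat (dimS n l) (dimS n l)" "Q_mat n l w \<in> carrier_mat (dimS n l) (dimS n l)"
    using gen_mat_carrier[OF i] Q_mat_carrier[OF w] by simp_all
  then have "dim_col (gen_mat n l (i, e)) = dim_row (Q_mat n l w)"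
    by simp
  then show ?case
    unfolding g Q_mat_Cons braid_perm_Cons
    using gen_mat_carries_marking[OF i] Cons.IH[OF w] by (rule carries_marking_mult)
qed

lemma Q_mat_diag_vanishes:
  assumes "valid_braid n w" "closure_is_knot n w" "r < dimS n l"
    and big: "\<not> (\<forall>x\<in>set (basisS n l ! r). x \<le> l)"
  shows "Q_mat n l w $$ (r, r) = 0"
proof (rule ccontr)
  assume nonzero: "Q_mat n l w $$ (r, r) \<noteq> 0"
  let ?u = "basisS n l ! r" and ?W = "big_marking n l r" and ?p = "braid_perm w"
  have u: "length ?u = n" "sum_list ?u \<le> n * l"
    using basisS_nth[OF assms(3)] by auto
  have "?W \<subseteq> ?p ` ?W"
    using Q_mat_carrier[OF assms(1), where l = l] assms(3) nonzero
    by (intro carries_marking_diag[OF Q_mat_carries_marking[OF assms(1)]]) auto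
  then have invariant: "(?p ^^ k) ` ?W = ?W" for k
    by (intro funpow_image_eq_if_subset_image inj_braid_perm) (simp add: big_positions_def)
  obtain a where a: "a \<in> ?W"
    using big u by (force simp: big_positions_def in_set_conv_nth)
  have "l < ?u ! b" if b: "b < n" for b
  proof -
    have "a < n"
      using a u(1) by (simp add: big_positions_def)
    then obtain k where "(?p ^^ k) a = b"
      using assms(2) b unfolding closure_is_knot_def by blast
    then have "b \<in> ?W"
      using invariant[of k] a by blast
    then show ?thesis
      by (simp add: big_positions_def)
  qed
  then have "n * Suc l \<le> sum_list ?u"
    using u(1) sum_mono[of "{..<n}" "\<lambda>_. Suc l" "(!) ?u"]
    by (simp add: sum_list_sum_nth lessThan_atLeast0 Suc_le_eq)
  moreover have "0 < n"
    using a u(1) by (auto simp: big_positions_def)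
  ultimately show False
    using u(2) by simp
qed

theorem lemma3p13:
  fixes n l :: nat and w :: "(nat \<times> bool) list"
  assumes "n \<ge> 1" and "l \<ge> 1"
    and "valid_braid n w" and "closure_is_knot n w"
  shows "trace_on n l (Q_mat n l w * Kinv_mat n l) (\<lambda>v. True)
       = trace_on n l (Q_mat n l w * Kinv_mat n l) (\<lambda>v. \<forall>x\<in>set v. x \<le> l)"
proof -
  have K: "diagonal_mat (Kinv_mat n l)" "Kinv_mat n l \<in> carrier_mat (dimS n l) (dimS n l)"
    unfolding diagonal_mat_def Kinv_mat_def by simp_all
  have "(Q_mat n l w * Kinv_mat n l) $$ (r, r) = 0"
    if "r < dimS n l" "\<not> (\<forall>x\<in>set (basisS n l ! r). x \<le> l)" for r
  proof -
    have "(Q_mat n l w * Kinv_mat n l) $$ (r, r) = Q_mat n l w $$ (r, r) * Kinv_mat n l $$ (r, r)"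
      using diag_mult_diagonal_mat[OF K(1) Q_mat_carrier[OF assms(3)] K(2) that(1)] .
    then show ?thesis
      using Q_mat_diag_vanishes[OF assms(3,4) that] by simp
  qed
  then show ?thesis
    unfolding trace_on_def by (intro sum.mono_neutral_right) auto
qed

end
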